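(* Let $R$ be a commutative Bezout domain of stable range 1.5, let $n\ge 2$, let $a_1,\dots,a_n\in R$ with $(a_1,\dots,a_n)=1$, let $\psi\in R$ be a fixed nonzero element, and fix an index $i$ with $2\le i\le n$. Then there exist $u_1,\dots,u_n\in R$ satisfying simultaneously: (1) $u_1a_1+\dots+u_na_n=1$; (2) $(u_1,\dots,u_i)=1$; (3) $(u_i,\psi)=1$.
   Context: A commutative Bezout domain is a commutative integral domain with $1\ne0$ in which every finitely generated ideal is principal; $(a,b,\dots)$ denotes a greatest common divisor. A commutative Bezout domain $R$ has stable range 1.5 if for all $a,b\in R$ and all $c\in R\setminus\{0\}$ with $(a,b,c)=1$ there exists $r\in R$ with $(a+br,c)=1$. *)

theory Defs
  imports Main
begin

definition ideal_gen :: "'a::comm_ring_1 set \<Rightarrow> 'a set" where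
  "ideal_gen S = {(\<Sum>s\<in>S. c s * s) | c. True}"

text \<open>Commutative Bezout domain: an integral domain (type class idom, which includes
  commutativity and 1 \<noteq> 0) in which every finitely generated ideal is principal.\<close>
definition bezout_domain :: "'a::idom itself \<Rightarrow> bool" where
  "bezout_domain _ \<longleftrightarrow>
     (\<forall>S::'a set. finite S \<longrightarrow> (\<exists>d. ideal_gen S = {d * r | r. True}))"

definition gcd_one :: "'a::idom set \<Rightarrow> bool" where
  "gcd_one S \<longleftrightarrow> (\<forall>d. (\<forall>x\<in>S. d dvd x) \<longrightarrow> d dvd 1)"

definition stable_range_1_5 :: "'a::idom itself \<Rightarrow> bool" where
  "stable_range_1_5 _ \<longleftrightarrow>
     (\<forall>a b c::'a. c \<noteq> 0 \<longrightarrow> gcd_one {a, b, c} \<longrightarrow> (\<exists>r. gcd_one {a + b * r, c}))"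

end

theory Submission
  imports Defs
begin

text \<open>Write \<open>1 = \<Sum>v\<^sub>k a\<^sub>k\<close> with \<open>v\<^sub>1 \<noteq> 0\<close> and split off the \<open>i\<close>-th term as
  \<open>v\<^sub>i a\<^sub>i + d = 1\<close>. Then \<open>(v\<^sub>i, d, \<psi> v\<^sub>1) = 1\<close>, so stable range 1.5 (applicable as \<open>\<psi> v\<^sub>1 \<noteq> 0\<close>) yields \<open>t\<close> with
  \<open>(v\<^sub>i + d t, \<psi> v\<^sub>1) = 1\<close>. Put \<open>u\<^sub>i = v\<^sub>i + d t\<close> and \<open>u\<^sub>k = (1 - a\<^sub>i t) v\<^sub>k\<close> for \<open>k \<noteq> i\<close>;
  this is again a solution of \<open>\<Sum>u\<^sub>k a\<^sub>k = 1\<close>, and \<open>v\<^sub>1 = a\<^sub>i v\<^sub>1 u\<^sub>i + d u\<^sub>1\<close> shows that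
  every common divisor of \<open>u\<^sub>i\<close> and \<open>u\<^sub>1\<close> divides \<open>\<psi> v\<^sub>1\<close>, hence is a unit.\<close>

lemma mem_ideal_gen:
  assumes "finite S" and "s \<in> S"
  shows "s \<in> ideal_gen S"
proof -
  have "(\<Sum>x\<in>S. (if x = s then 1 else 0) * x) = s"
    using assms by (simp add: if_distrib[of "\<lambda>c. c * _"] cong: if_cong)
  then show ?thesis
    unfolding ideal_gen_def by (intro CollectI exI[of _ "\<lambda>x. if x = s then 1 else 0"]) simp
qed

lemma one_mem_ideal_gen_if_gcd_one:
  assumes "bezout_domain TYPE('a::idom)" and "finite S" and "gcd_one (S :: 'a set)"
  shows "1 \<in> ideal_gen S"
proof -
  obtain d where d: "ideal_gen S = {d * r | r. True}"
    using assms(1,2) unfolding bezout_domain_def by blast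
  have "d dvd s" if "s \<in> S" for s
    using mem_ideal_gen[OF assms(2) that] d by auto
  then have "d dvd 1"
    using assms(3) unfolding gcd_one_def by blast
  then show ?thesis
    using d by (metis (mono_tags, lifting) dvdE mem_Collect_eq)
qed

lemma ideal_gen_image_combination:
  fixes a :: "'b \<Rightarrow> 'a::comm_ring_1"
  assumes "finite A" and "y \<in> ideal_gen (a ` A)"
  shows "\<exists>v. (\<Sum>k\<in>A. v k * a k) = y"
proof -
  obtain c where c: "(\<Sum>s\<in>a ` A. c s * s) = y"
    using assms(2) unfolding ideal_gen_def by blast
  define B where "B = inv_into A a ` a ` A"
  have "B \<subseteq> A"
    unfolding B_def by (auto intro: inv_into_into)
  have "(\<Sum>s\<in>a ` A. c s * s) = (\<Sum>k\<in>B. c (a k) * a k)"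
    unfolding B_def by (subst sum.reindex[OF inj_on_inv_into]) (auto simp: f_inv_into_f)
  also have "\<dots> = (\<Sum>k\<in>A. (if k \<in> B then c (a k) else 0) * a k)"
    using \<open>B \<subseteq> A\<close> assms(1) by (intro sum.mono_neutral_cong_left) auto
  finally show ?thesis
    using c by (intro exI[of _ "\<lambda>k. if k \<in> B then c (a k) else 0"]) simp
qed

lemma gcd_one_mono:
  assumes "gcd_one S" and "S \<subseteq> T"
  shows "gcd_one T"
  using assms unfolding gcd_one_def by blast

lemma gcd_one_if_combination:
  assumes "p * x + q * y = 1" and "x \<in> S" and "y \<in> S"
  shows "gcd_one S"
  unfolding gcd_one_def
proof (intro allI impI)
  fix \<delta> assume "\<forall>s\<in>S. \<delta> dvd s"
  then have "\<delta> dvd p * x + q * y"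
    using assms(2,3) by simp
  then show "\<delta> dvd 1"
    using assms(1) by simp
qed

lemma gcd_one_pair_transfer:
  assumes "gcd_one {x, y}" and "\<And>\<delta>. \<delta> dvd x \<Longrightarrow> \<delta> dvd z \<Longrightarrow> \<delta> dvd y"
  shows "gcd_one {x, z}"
  using assms unfolding gcd_one_def by auto

lemma sum_fun_upd_coeff:
  fixes a v :: "'b \<Rightarrow> 'a::comm_ring_1"
  assumes "finite A" and "j \<in> A"
  shows "(\<Sum>k\<in>A. (v(j := x)) k * a k) = (\<Sum>k\<in>A. v k * a k) - v j * a j + x * a j"
proof -
  have "(\<Sum>k\<in>A - {j}. (v(j := x)) k * a k) = (\<Sum>k\<in>A - {j}. v k * a k)"
    by (rule sum.cong) auto
  then have "(\<Sum>k\<in>A. (v(j := x)) k * a k) = x * a j + (\<Sum>k\<in>A - {j}. v k * a k)"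
    using assms by (simp add: sum.remove)
  moreover have "(\<Sum>k\<in>A. v k * a k) = v j * a j + (\<Sum>k\<in>A - {j}. v k * a k)"
    using assms by (simp add: sum.remove)
  ultimately show ?thesis
    by (simp add: algebra_simps)
qed

lemma combination_with_nonzero_coeff:
  fixes a v :: "'b \<Rightarrow> 'a::idom"
  assumes "finite A" and "j \<in> A" and sum: "(\<Sum>k\<in>A. v k * a k) = y" and "y \<noteq> 0"
  shows "\<exists>w. (\<Sum>k\<in>A. w k * a k) = y \<and> w j \<noteq> 0"
proof (cases "v j = 0")
  case False
  then show ?thesis
    using sum by blast
next
  case vj: True
  show ?thesis
  proof (cases "a j = 0")
    case True
    then show ?thesis
      using sum_fun_upd_coeff[OF assms(1,2), of v 1 a] sum by (intro exI[of _ "v(j := 1)"]) simp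
  next
    case False
    have "\<exists>k\<in>A - {j}. a k \<noteq> 0"
    proof (rule ccontr)
      assume "\<not> ?thesis"
      then have "(\<Sum>k\<in>A. v k * a k) = v j * a j"
        using assms(1,2) by (simp add: sum.remove)
      then show False
        using sum vj \<open>y \<noteq> 0\<close> by simp
    qed
    then obtain k where k: "k \<in> A" "k \<noteq> j" "a k \<noteq> 0"
      by blast
    \<comment> \<open>Move \<open>a\<^sub>j a\<^sub>k\<close> from the \<open>k\<close>-th to the \<open>j\<close>-th term.\<close>
    define w where "w = (v(k := v k - a j))(j := a k)"
    have "(\<Sum>k\<in>A. w k * a k) = y"
      unfolding w_def using sum_fun_upd_coeff[OF assms(1,2), of "v(k := v k - a j)" "a k" a]
        sum_fun_upd_coeff[OF assms(1) k(1), of v "v k - a j" a] k(2) vj sum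
      by (simp add: algebra_simps)
    moreover have "w j \<noteq> 0"
      using k by (simp add: w_def)
    ultimately show ?thesis
      by blast
  qed
qed

lemma stable_range_coprime_coeffs:
  fixes a v :: "'b \<Rightarrow> 'a::idom"
  assumes "stable_range_1_5 TYPE('a)" and "finite A" and "i \<in> A" and "j \<in> A" and "j \<noteq> i"
    and sum: "(\<Sum>k\<in>A. v k * a k) = 1" and "v j \<noteq> 0" and "\<psi> \<noteq> 0"
  shows "\<exists>u. (\<Sum>k\<in>A. u k * a k) = 1 \<and> gcd_one {u i, u j} \<and> gcd_one {u i, \<psi>}"
proof -
  define d where "d = (\<Sum>k\<in>A - {i}. v k * a k)"
  have split: "v i * a i + d = 1"
    using sum assms(2,3) unfolding d_def by (simp add: sum.remove)
  then have "gcd_one {v i, d, \<psi> * v j}"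
    by (intro gcd_one_if_combination[of "a i" "v i" 1 d]) (simp_all add: algebra_simps)
  moreover have "\<psi> * v j \<noteq> 0"
    using assms(7,8) by simp
  ultimately obtain t where t: "gcd_one {v i + d * t, \<psi> * v j}"
    using assms(1) unfolding stable_range_1_5_def by blast
  define u where "u k = (if k = i then v i + d * t else (1 - a i * t) * v k)" for k
  have "(\<Sum>k\<in>A - {i}. u k * a k) = (\<Sum>k\<in>A - {i}. (1 - a i * t) * (v k * a k))"
    by (rule sum.cong) (auto simp: u_def)
  then have "(\<Sum>k\<in>A. u k * a k) = u i * a i + (\<Sum>k\<in>A - {i}. (1 - a i * t) * (v k * a k))"
    using assms(2,3) by (simp add: sum.remove)
  also have "\<dots> = (v i + d * t) * a i + (1 - a i * t) * d"
    by (simp add: u_def d_def sum_distrib_left)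
  also have "\<dots> = 1"
    using split by (simp add: algebra_simps)
  finally have "(\<Sum>k\<in>A. u k * a k) = 1" .
  moreover have "gcd_one {u i, u j}"
  proof (rule gcd_one_pair_transfer)
    show "gcd_one {u i, \<psi> * v j}"
      using t by (simp add: u_def)
    have "(a i * v j) * u i + d * u j = (v i * a i + d) * v j"
      using assms(5) by (simp add: u_def algebra_simps)
    then have "v j = (a i * v j) * u i + d * u j"
      using split by simp
    then show "\<delta> dvd \<psi> * v j" if "\<delta> dvd u i" and "\<delta> dvd u j" for \<delta>
      using that by (metis dvd_add dvd_mult)
  qed
  moreover have "gcd_one {u i, \<psi>}"
    by (rule gcd_one_pair_transfer[of _ "\<psi> * v j"]) (use t in \<open>simp_all add: u_def\<close>)
  ultimately show ?thesis
    by blast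
qed

theorem theorem1p9:
  fixes a :: "nat \<Rightarrow> 'a::idom" and \<psi> :: 'a and n i :: nat
  assumes "bezout_domain TYPE('a)"
    and "stable_range_1_5 TYPE('a)"
    and "n \<ge> 2"
    and "gcd_one (a ` {1..n})"
    and "\<psi> \<noteq> 0"
    and "2 \<le> i" and "i \<le> n"
  shows "\<exists>u :: nat \<Rightarrow> 'a.
           (\<Sum>k = 1..n. u k * a k) = 1
         \<and> gcd_one (u ` {1..i})
         \<and> gcd_one {u i, \<psi>}"
proof -
  have range: "1 \<in> {1..n}" "i \<in> {1..n}" "1 \<noteq> i"
    using assms(3,6,7) by auto
  have "1 \<in> ideal_gen (a ` {1..n})"
    using one_mem_ideal_gen_if_gcd_one[OF assms(1) _ assms(4)] by simp
  then obtain v0 where v0: "(\<Sum>k = 1..n. v0 k * a k) = 1"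
    using ideal_gen_image_combination[of "{1..n}"] by auto
  obtain v where v: "(\<Sum>k = 1..n. v k * a k) = 1" "v 1 \<noteq> 0"
    using combination_with_nonzero_coeff[OF _ range(1) v0] by auto
  obtain u where u: "(\<Sum>k = 1..n. u k * a k) = 1" "gcd_one {u i, u 1}" "gcd_one {u i, \<psi>}"
    using stable_range_coprime_coeffs[OF assms(2) _ range(2,1,3) v assms(5)] by auto
  have "gcd_one (u ` {1..i})"
    using assms(6) by (intro gcd_one_mono[OF u(2)]) auto
  with u show ?thesis
    by blast
qed

end
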